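(* For any sum-indecomposable permutation $\sigma$, the class $\mathrm{St}(\mathrm{Inc},\mathrm{Av}(\sigma))$ is a subclass of $\mathrm{Av}(1\ominus\sigma)$.
   Context: $\mathrm{Av}(\sigma)$ is the class of permutations not containing $\sigma$; $\mathrm{Inc}=\mathrm{Av}(21)$ is the class of increasing permutations. $\pi\oplus\sigma$ is the permutation whose diagram is a copy of $\pi$ with a copy of $\sigma$ placed above and to the right; $\pi\ominus\sigma$ has a copy of $\sigma$ placed below and to the right of a copy of $\pi$. $\sigma$ is sum-indecomposable if it is not a direct sum of two shorter permutations. Grid classes: for a $k\times\ell$ matrix $\mathcal{M}$ of permutation classes ($k$ columns, $\ell$ rows, $\mathcal{M}_{i,j}$ in column $i$, row $j$, rows numbered bottom to top), a permutation $\pi$ of length $n$ is in $\mathrm{Grid}(\mathcal{M})$ if there are $1=c_1\le\dots\le c_{k+1}=n+1$, $1=r_1\le\dots\le r_{\ell+1}=n+1$ such that for each $i,j$ the points $(x,\pi_x)$ with $c_i\le x<c_{i+1}$, $r_j\le\pi_x<r_{j+1}$ form a pattern in $\mathcal{M}_{i,j}$. For classes $\mathcal{C},\mathcal{D}$, $\mathrm{St}_k(\mathcal{C},\mathcal{D})=\mathrm{Grid}(\mathcal{M})$ where $\mathcal{M}$ is the matrix with $k$ columns and $k+1$ rows whose only nonempty entries are $\mathcal{M}_{i,i+1}=\mathcal{C}$ and $\mathcal{M}_{i,i}=\mathcal{D}$ for $i\in[k]$ (so in each column the $\mathcal{C}$-cell lies directly above the $\mathcal{D}$-cell), and $\mathrm{St}(\mathcal{C},\mathcal{D})=\bigcup_{k\ge1}\mathrm{St}_k(\mathcal{C},\mathcal{D})$.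 *)

theory Defs
  imports Main
begin

text \<open>Permutations of length n are lists that are arrangements of 0,...,n-1
  (0-based values; position x has value p!x).\<close>

definition is_perm :: "nat list \<Rightarrow> bool" where
  "is_perm p \<longleftrightarrow> distinct p \<and> set p = {0..<length p}"

definition order_iso :: "nat list \<Rightarrow> nat list \<Rightarrow> bool" where
  "order_iso xs ys \<longleftrightarrow> length xs = length ys \<and>
     (\<forall>i<length xs. \<forall>j<length xs. (xs!i < xs!j) = (ys!i < ys!j))"

definition contains :: "nat list \<Rightarrow> nat list \<Rightarrow> bool" where
  "contains pi sigma \<longleftrightarrow> (\<exists>idx. sorted_wrt (<) idx \<and> length idx = length sigma \<and>
      (\<forall>x\<in>set idx. x < length pi) \<and> order_iso (map (\<lambda>x. pi!x) idx) sigma)"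

definition Av :: "nat list \<Rightarrow> nat list set" where
  "Av sigma = {pi. is_perm pi \<and> \<not> contains pi sigma}"

definition Inc :: "nat list set" where
  "Inc = Av [1, 0]"

definition direct_sum :: "nat list \<Rightarrow> nat list \<Rightarrow> nat list" where
  "direct_sum a b = a @ map (\<lambda>x. x + length a) b"

definition skew_sum :: "nat list \<Rightarrow> nat list \<Rightarrow> nat list" where
  "skew_sum a b = map (\<lambda>x. x + length b) a @ b"

definition sum_indecomposable :: "nat list \<Rightarrow> bool" where
  "sum_indecomposable s \<longleftrightarrow> is_perm s \<and> s \<noteq> [] \<and>
     \<not> (\<exists>a b. is_perm a \<and> is_perm b \<and> a \<noteq> [] \<and> b \<noteq> [] \<and> s = direct_sum a b)"

definition pattern_in :: "nat list set \<Rightarrow> nat list \<Rightarrow> bool" where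
  "pattern_in C xs \<longleftrightarrow> (\<exists>t\<in>C. order_iso xs t)"

definition cell_seq :: "nat list \<Rightarrow> (nat \<Rightarrow> nat) \<Rightarrow> (nat \<Rightarrow> nat) \<Rightarrow> nat \<Rightarrow> nat \<Rightarrow> nat list" where
  "cell_seq pi c r i j = map (\<lambda>x. pi!x)
     (filter (\<lambda>x. c i \<le> x \<and> x < c (Suc i) \<and> r j \<le> pi!x \<and> pi!x < r (Suc j)) [0..<length pi])"

text \<open>Grid class of a k-column, l-row matrix M (M i j = entry in column i, row j,
  0-based, rows bottom to top). An empty cell imposes no condition (the empty
  pattern belongs to every class, including the empty entry {}).\<close>
definition Grid :: "nat \<Rightarrow> nat \<Rightarrow> (nat \<Rightarrow> nat \<Rightarrow> nat list set) \<Rightarrow> nat list set" where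
  "Grid k l M = {pi. is_perm pi \<and> (\<exists>c r.
      c 0 = 0 \<and> c k = length pi \<and> (\<forall>i<k. c i \<le> c (Suc i)) \<and>
      r 0 = 0 \<and> r l = length pi \<and> (\<forall>j<l. r j \<le> r (Suc j)) \<and>
      (\<forall>i<k. \<forall>j<l. cell_seq pi c r i j = [] \<or> pattern_in (M i j) (cell_seq pi c r i j)))}"

definition St_k :: "nat \<Rightarrow> nat list set \<Rightarrow> nat list set \<Rightarrow> nat list set" where
  "St_k k C D = Grid k (Suc k) (\<lambda>i j. if j = Suc i then C else if j = i then D else {})"

definition St :: "nat list set \<Rightarrow> nat list set \<Rightarrow> nat list set" where
  "St C D = (\<Union>k\<in>{1..}. St_k k C D)"

end

theory Submission
  imports Defs "HOL-Library.Sublist"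
begin

text \<open>Suppose \<pi> is gridded in the staircase and contains 1 \<ominus> \<sigma>, with the 1 at position x0 in
  cell (i, j), j \<in> {i, i+1}.  Every point of the copy of \<sigma> lies to the right of and below x0,
  hence in a cell weakly to the right of and below (i, j).  If j = i this is only cell (i, i), so
  \<sigma> lies in a single Av \<sigma> cell.  If j = i+1 it cannot share the increasing cell (i, i+1)
  with x0, so it lies in the cells (i, i) and (i+1, i+1); the first of these is below and to the
  left of the second, which splits \<sigma> as a direct sum, and sum-indecomposability again puts
  all of \<sigma> in one Av \<sigma> cell.\<close>

lemma subseq_ex_indices:
  assumes "subseq ys xs"
  shows "\<exists>idx. sorted_wrt (<) idx \<and> (\<forall>i\<in>set idx. i < length xs) \<and>
    ys = map ((!) xs) idx"
  using assms
proof (induction rule: list_emb.induct)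
  case (list_emb_Nil xs)
  show ?case by (intro exI[of _ "[]"]) simp
next
  case (list_emb_Cons ys xs x)
  then obtain idx where "sorted_wrt (<) idx" "\<forall>i\<in>set idx. i < length xs" "ys = map ((!) xs) idx"
    by blast
  then show ?case by (intro exI[of _ "map Suc idx"]) (simp add: sorted_wrt_map)
next
  case (list_emb_Cons2 y x ys xs)
  then obtain idx where "sorted_wrt (<) idx" "\<forall>i\<in>set idx. i < length xs" "ys = map ((!) xs) idx"
    by blast
  then show ?case
    using list_emb_Cons2.hyps(1) by (intro exI[of _ "0 # map Suc idx"]) (auto simp: sorted_wrt_map)
qed

lemma contains_subseq:
  assumes "subseq ys xs" and "order_iso ys \<sigma>"
  shows "contains xs \<sigma>"
  using subseq_ex_indices[OF assms(1)] assms(2) unfolding contains_def order_iso_def by auto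

lemma contains_order_iso:
  assumes "contains xs \<sigma>" and "order_iso xs ys"
  shows "contains ys \<sigma>"
proof -
  obtain idx where idx: "sorted_wrt (<) idx" "length idx = length \<sigma>" "\<forall>i\<in>set idx. i < length xs"
    "order_iso (map ((!) xs) idx) \<sigma>"
    using assms(1) unfolding contains_def by blast
  have "order_iso (map ((!) ys) idx) \<sigma>"
    using idx(3,4) assms(2) unfolding order_iso_def by auto
  then show ?thesis
    using idx(1-3) assms(2) unfolding contains_def order_iso_def by auto
qed

lemma pattern_in_Av_not_contains: "pattern_in (Av \<sigma>) xs \<Longrightarrow> \<not> contains xs \<sigma>"
  unfolding pattern_in_def Av_def using contains_order_iso by blast

lemma pattern_in_Inc_sorted:
  assumes "pattern_in Inc xs"
  shows "sorted xs"
proof -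
  obtain t where t: "t \<in> Inc" "order_iso xs t"
    using assms unfolding pattern_in_def by blast
  have "xs ! i \<le> xs ! j" if ij: "i < j" "j < length xs" for i j
  proof (rule ccontr)
    assume "\<not> xs ! i \<le> xs ! j"
    moreover have "xs ! j < xs ! i \<longleftrightarrow> t ! j < t ! i"
      using t(2) ij unfolding order_iso_def by auto
    ultimately have "t ! j < t ! i" by simp
    then have "order_iso (map ((!) t) [i, j]) [1, 0]"
      by (auto simp: order_iso_def less_Suc_eq nth_Cons')
    then have "contains t [1, 0]"
      using t(2) ij unfolding contains_def order_iso_def by (intro exI[of _ "[i, j]"]) auto
    then show False using t(1) by (simp add: Inc_def Av_def)
  qed
  then show ?thesis by (simp add: sorted_iff_nth_mono_less)
qed

lemma sorted_subseq: "sorted xs \<Longrightarrow> subseq ys xs \<Longrightarrow> sorted ys"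
  by (auto simp: subseq_conv_nths sorted_nths)

lemma is_perm_nth_less: "is_perm s \<Longrightarrow> i < length s \<Longrightarrow> s ! i < length s"
  unfolding is_perm_def by (metis atLeastLessThan_iff nth_mem)

lemma contains_skew_sum_singleton:
  assumes "contains \<pi> (skew_sum [0] \<sigma>)" and "is_perm \<sigma>"
  shows "\<exists>x0 ys. x0 < length \<pi> \<and> sorted_wrt (<) ys \<and>
    (\<forall>y\<in>set ys. x0 < y \<and> y < length \<pi> \<and> \<pi> ! y < \<pi> ! x0) \<and> order_iso (map ((!) \<pi>) ys) \<sigma>"
proof -
  obtain x0 ys where idx: "sorted_wrt (<) (x0 # ys)" "length ys = length \<sigma>"
    "\<forall>x\<in>set (x0 # ys). x < length \<pi>"
    and iso: "order_iso (\<pi> ! x0 # map ((!) \<pi>) ys) (length \<sigma> # \<sigma>)"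
    using assms(1) unfolding contains_def skew_sum_def by (auto simp: length_Suc_conv)
  have iso_at: "((\<pi> ! x0 # map ((!) \<pi>) ys) ! p < (\<pi> ! x0 # map ((!) \<pi>) ys) ! q) =
      ((length \<sigma> # \<sigma>) ! p < (length \<sigma> # \<sigma>) ! q)"
    if "p < Suc (length ys)" "q < Suc (length ys)" for p q
    using iso that by (simp add: order_iso_def)
  have "\<pi> ! y < \<pi> ! x0" if "y \<in> set ys" for y
  proof -
    obtain a where a: "a < length ys" "y = ys ! a"
      using \<open>y \<in> set ys\<close> by (auto simp: in_set_conv_nth)
    have "\<sigma> ! a < length \<sigma>"
      using is_perm_nth_less[OF assms(2)] a idx(2) by simp
    then show ?thesis using iso_at[of "Suc a" 0] a by simp
  qed
  moreover have "order_iso (map ((!) \<pi>) ys) \<sigma>"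
    using iso_at[of "Suc _" "Suc _"] idx(2) by (simp add: order_iso_def)
  ultimately show ?thesis using idx by (intro exI[of _ x0] exI[of _ ys]) auto
qed

lemma is_perm_set_take_eq:
  assumes perm: "is_perm s" and m: "m \<le> length s"
    and sep: "\<forall>x\<in>set (take m s). \<forall>y\<in>set (drop m s). x < y"
  shows "set (take m s) = {..<m}"
proof -
  have s: "set s = {..<length s}" "distinct s"
    using perm by (simp_all add: is_perm_def atLeast0LessThan)
  have "v < m" if v: "v \<in> set (take m s)" for v
  proof -
    have "{..v} \<subseteq> set (take m s)"
    proof
      fix w assume "w \<in> {..v}"
      moreover have "v < length s" using v s(1) in_set_takeD by fastforce
      ultimately have "w \<in> set (take m s @ drop m s)"
        using s(1) by simp
      then show "w \<in> set (take m s)"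
        using sep v \<open>w \<in> {..v}\<close> unfolding set_append by fastforce
    qed
    then have "card {..v} \<le> card (set (take m s))" by (intro card_mono) auto
    also have "\<dots> = m" using s(2) m by (simp add: distinct_card)
    finally show "v < m" by simp
  qed
  then have "set (take m s) \<subseteq> {..<m}" by blast
  moreover have "card (set (take m s)) = card {..<m}" using s(2) m by (simp add: distinct_card)
  ultimately show ?thesis by (simp add: card_subset_eq)
qed

lemma is_perm_split_direct_sum:
  assumes perm: "is_perm s" and m: "m \<le> length s"
    and sep: "\<forall>x\<in>set (take m s). \<forall>y\<in>set (drop m s). x < y"
  defines "b \<equiv> map (\<lambda>y. y - m) (drop m s)"
  shows "is_perm (take m s)" and "is_perm b" and "s = direct_sum (take m s) b"
proof -
  have s: "set s = {..<length s}" "distinct s"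
    using perm by (simp_all add: is_perm_def atLeast0LessThan)
  have lower: "set (take m s) = {..<m}"
    using is_perm_set_take_eq[OF assms(1-3)] .
  have upper: "set (drop m s) = {m..<length s}"
  proof -
    have "set (take m s) \<union> set (drop m s) = {..<length s}"
      using s(1) by (metis set_append append_take_drop_id)
    moreover have "set (take m s) \<inter> set (drop m s) = {}"
      using s(2) by (rule set_take_disj_set_drop_if_distinct) simp
    ultimately have "set (drop m s) = {..<length s} - {..<m}"
      using lower by blast
    then show ?thesis by auto
  qed
  show "is_perm (take m s)" using lower s(2) m by (simp add: is_perm_def atLeast0LessThan)
  have "inj_on (\<lambda>y. y - m) (set (drop m s))" using upper by (auto simp: inj_on_def)
  moreover have "(\<lambda>y. y - m) ` {m..<length s} = {..<length s - m}"
    by (auto simp: image_iff intro!: bexI[where x = "_ + m"])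
  ultimately show "is_perm b"
    using upper s(2) by (simp add: b_def is_perm_def atLeast0LessThan distinct_map)
  have "map (\<lambda>y. y + m) b = drop m s"
    unfolding b_def map_map by (rule map_idI) (use upper in auto)
  then show "s = direct_sum (take m s) b"
    using m by (simp add: direct_sum_def)
qed

lemma sum_indecomposable_order_iso_append:
  assumes indec: "sum_indecomposable \<sigma>" and iso: "order_iso (xs @ ys) \<sigma>"
    and sep: "\<forall>x\<in>set xs. \<forall>y\<in>set ys. x < y"
  shows "xs = [] \<or> ys = []"
proof (rule ccontr)
  assume nonempty: "\<not> (xs = [] \<or> ys = [])"
  define m where "m = length xs"
  have len: "length \<sigma> = m + length ys" using iso by (simp add: order_iso_def m_def)
  have perm: "is_perm \<sigma>" using indec by (simp add: sum_indecomposable_def)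
  have "\<sigma> ! a < \<sigma> ! b" if "a < m" "m \<le> b" "b < length \<sigma>" for a b
  proof -
    have "(xs @ ys) ! a < (xs @ ys) ! b"
      using sep that len by (simp add: nth_append m_def)
    then show ?thesis using iso that unfolding order_iso_def by auto
  qed
  then have "\<forall>x\<in>set (take m \<sigma>). \<forall>y\<in>set (drop m \<sigma>). x < y"
    using len by (auto simp: in_set_conv_nth)
  then have "is_perm (take m \<sigma>)" "is_perm (map (\<lambda>y. y - m) (drop m \<sigma>))"
    "\<sigma> = direct_sum (take m \<sigma>) (map (\<lambda>y. y - m) (drop m \<sigma>))"
    using is_perm_split_direct_sum[OF perm] len by simp_all
  moreover have "take m \<sigma> \<noteq> []" "map (\<lambda>y. y - m) (drop m \<sigma>) \<noteq> []"
    using nonempty len by (auto simp: m_def)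
  ultimately show False using indec unfolding sum_indecomposable_def by blast
qed

lemma step_mono_le:
  fixes f :: "nat \<Rightarrow> 'a::order"
  assumes "\<forall>i<k. f i \<le> f (Suc i)" and "a \<le> b" and "b \<le> k"
  shows "f a \<le> f b"
proof -
  have "f (min n k) \<le> f (min (Suc n) k)" for n
    using assms(1) by (cases "n < k") (auto simp: min_def)
  from lift_Suc_mono_le[of "\<lambda>n. f (min n k)", OF this assms(2)] show ?thesis
    using assms(2,3) by (simp add: min_def)
qed

lemma ex_step_interval:
  fixes f :: "nat \<Rightarrow> nat"
  assumes "f 0 = 0" and "x < f k"
  shows "\<exists>i<k. f i \<le> x \<and> x < f (Suc i)"
  using assms(2)
proof (induction k)
  case 0
  then show ?case using assms(1) by simp
next
  case (Suc k)
  then show ?case by (cases "x < f k") (auto intro: less_SucI)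
qed

locale staircase_gridding =
  fixes \<pi> :: "nat list" and k :: nat and c r :: "nat \<Rightarrow> nat" and C D :: "nat list set"
  assumes perm: "is_perm \<pi>"
    and col_bounds: "c 0 = 0" "c k = length \<pi>" and col_mono: "\<forall>i<k. c i \<le> c (Suc i)"
    and row_bounds: "r 0 = 0" "r (Suc k) = length \<pi>" and row_mono: "\<forall>j<Suc k. r j \<le> r (Suc j)"
    and cells: "\<forall>i<k. \<forall>j<Suc k. cell_seq \<pi> c r i j = [] \<or>
      pattern_in (if j = Suc i then C else if j = i then D else {}) (cell_seq \<pi> c r i j)"
begin

definition in_cell :: "nat \<Rightarrow> nat \<Rightarrow> nat \<Rightarrow> bool" where
  "in_cell x i j \<longleftrightarrow>
     x < length \<pi> \<and> c i \<le> x \<and> x < c (Suc i) \<and> r j \<le> \<pi> ! x \<and> \<pi> ! x < r (Suc j)"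

lemma cell_seq_eq:
  "cell_seq \<pi> c r i j = map ((!) \<pi>) (filter (\<lambda>x. in_cell x i j) [0..<length \<pi>])"
  unfolding cell_seq_def in_cell_def by (auto intro!: arg_cong[where f = "map _"] filter_cong)

lemma subseq_cell_seq:
  assumes "sorted_wrt (<) xs" and "\<forall>x\<in>set xs. in_cell x i j"
  shows "subseq (map ((!) \<pi>) xs) (cell_seq \<pi> c r i j)"
proof -
  have "subseq xs (filter (\<lambda>x. in_cell x i j) [0..<length \<pi>])"
    using assms by (intro sorted_subset_imp_subseq sorted_wrt_filter) (auto simp: in_cell_def)
  then show ?thesis unfolding cell_seq_eq by (rule subseq_map)
qed

lemma in_cell_pattern_in:
  assumes "in_cell x i j" and "i < k" and "j < Suc k"
  shows "pattern_in (if j = Suc i then C else if j = i then D else {}) (cell_seq \<pi> c r i j)"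
proof -
  have "cell_seq \<pi> c r i j \<noteq> []"
    using assms(1) unfolding cell_seq_eq by (auto simp: in_cell_def filter_empty_conv)
  then show ?thesis using cells assms(2,3) by blast
qed

lemma in_cell_diag_or_above:
  assumes "in_cell x i j" and "i < k" and "j < Suc k"
  shows "j = i \<or> j = Suc i"
  using in_cell_pattern_in[OF assms] by (auto simp: pattern_in_def split: if_splits)

lemma ex_cell:
  assumes "x < length \<pi>"
  shows "\<exists>i<k. in_cell x i i \<or> in_cell x i (Suc i)"
proof -
  obtain j where j: "j < Suc k" "r j \<le> \<pi> ! x" "\<pi> ! x < r (Suc j)"
    using ex_step_interval[of r "\<pi> ! x" "Suc k"] row_bounds is_perm_nth_less[OF perm assms]
    by auto
  obtain i where i: "i < k" "c i \<le> x" "x < c (Suc i)"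
    using ex_step_interval[of c x k] col_bounds assms by auto
  have "in_cell x i j" using assms i j by (simp add: in_cell_def)
  with i(1) j(1) show ?thesis using in_cell_diag_or_above by blast
qed

lemma in_cell_col_le:
  assumes "in_cell x i j" and "in_cell y i' j'" and "x \<le> y" and "i < k"
  shows "i \<le> i'"
proof (rule ccontr)
  assume "\<not> i \<le> i'"
  then have "c (Suc i') \<le> c i" using step_mono_le[OF col_mono] assms(4) by simp
  then show False using assms(1-3) by (simp add: in_cell_def)
qed

lemma in_cell_row_le:
  assumes "in_cell x i j" and "in_cell y i' j'" and "\<pi> ! y \<le> \<pi> ! x" and "j' < Suc k"
  shows "j' \<le> j"
proof (rule ccontr)
  assume "\<not> j' \<le> j"
  then have "r (Suc j) \<le> r j'" using step_mono_le[OF row_mono] assms(4) by simp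
  then show False using assms(1-3) by (simp add: in_cell_def)
qed

lemma below_right_cell:
  assumes x: "in_cell x i j" "i < k" and y: "y < length \<pi>" "x < y" "\<pi> ! y < \<pi> ! x"
  shows "\<exists>i' j'. i \<le> i' \<and> j' \<le> j \<and> i' < k \<and> (j' = i' \<or> j' = Suc i') \<and> in_cell y i' j'"
proof -
  obtain i' j' where y_cell: "in_cell y i' j'" "i' < k" "j' = i' \<or> j' = Suc i'"
    using ex_cell[OF y(1)] by blast
  then have "i \<le> i'" using in_cell_col_le x(1,2) y(2) by simp
  moreover have "j' \<le> j" using in_cell_row_le[OF x(1) y_cell(1)] y_cell(2,3) y(3) by auto
  ultimately show ?thesis using y_cell by blast
qed

end

locale staircase_gridding_Inc_Av = staircase_gridding \<pi> k c r Inc "Av \<sigma>" for \<pi> k c r \<sigma> +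
  assumes indecomposable: "sum_indecomposable \<sigma>"
begin

lemma Inc_cell_increasing:
  assumes "in_cell x i (Suc i)" and "in_cell y i (Suc i)" and "i < k" and "x < y"
  shows "\<pi> ! x < \<pi> ! y"
proof -
  have "subseq [\<pi> ! x, \<pi> ! y] (cell_seq \<pi> c r i (Suc i))"
    using subseq_cell_seq[of "[x, y]" i "Suc i"] assms by simp
  moreover have "sorted (cell_seq \<pi> c r i (Suc i))"
    using in_cell_pattern_in[OF assms(1,3)] assms(3) by (simp add: pattern_in_Inc_sorted)
  ultimately have "\<pi> ! x \<le> \<pi> ! y" by (metis sorted_subseq sorted2)
  moreover have "\<pi> ! x \<noteq> \<pi> ! y"
    using perm assms(1,2,4) by (simp add: is_perm_def in_cell_def nth_eq_iff_index_eq)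
  ultimately show ?thesis by simp
qed

lemma no_copy_in_Av_cell:
  assumes "i < k" and "sorted_wrt (<) ys" and "ys \<noteq> []" and "\<forall>y\<in>set ys. in_cell y i i"
  shows "\<not> order_iso (map ((!) \<pi>) ys) \<sigma>"
proof
  assume iso: "order_iso (map ((!) \<pi>) ys) \<sigma>"
  have "pattern_in (Av \<sigma>) (cell_seq \<pi> c r i i)"
    using in_cell_pattern_in[of "hd ys" i i] assms(1,3,4) by simp
  moreover have "contains (cell_seq \<pi> c r i i) \<sigma>"
    using contains_subseq[OF subseq_cell_seq[OF assms(2,4)] iso] .
  ultimately show False by (simp add: pattern_in_Av_not_contains)
qed

lemma no_copy_in_adjacent_Av_cells:
  assumes i: "i < k" and ys: "sorted_wrt (<) ys"
    and cells: "\<forall>y\<in>set ys. in_cell y i i \<or> (Suc i < k \<and> in_cell y (Suc i) (Suc i))"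
  shows "\<not> order_iso (map ((!) \<pi>) ys) \<sigma>"
proof
  assume iso: "order_iso (map ((!) \<pi>) ys) \<sigma>"
  define lower where "lower = takeWhile (\<lambda>y. in_cell y i i) ys"
  define upper where "upper = dropWhile (\<lambda>y. in_cell y i i) ys"
  have lower_cell: "\<forall>y\<in>set lower. in_cell y i i"
    unfolding lower_def by (auto dest: set_takeWhileD)
  have upper_cell: "\<forall>y\<in>set upper. Suc i < k \<and> in_cell y (Suc i) (Suc i)"
  proof (cases upper)
    case (Cons y0 rest)
    then have split: "ys = lower @ y0 # rest" and y0: "\<not> in_cell y0 i i"
      unfolding lower_def upper_def by (simp_all add: dropWhile_eq_Cons_conv)
    have y0_upper: "Suc i < k \<and> in_cell y0 (Suc i) (Suc i)" using cells y0 split by auto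
    have "\<not> in_cell y i i" if "y \<in> set rest" for y
      using ys y0_upper that by (auto simp: split sorted_wrt_append in_cell_def)
    then show ?thesis using cells split Cons y0_upper by auto
  qed simp
  have "\<forall>u\<in>set (map ((!) \<pi>) lower). \<forall>v\<in>set (map ((!) \<pi>) upper). u < v"
    using lower_cell upper_cell by (fastforce simp: in_cell_def)
  moreover have "order_iso (map ((!) \<pi>) lower @ map ((!) \<pi>) upper) \<sigma>"
    using iso by (simp add: lower_def upper_def flip: map_append)
  ultimately have "map ((!) \<pi>) lower = [] \<or> map ((!) \<pi>) upper = []"
    using sum_indecomposable_order_iso_append[OF indecomposable] by blast
  then have "lower = [] \<or> upper = []" by simp
  moreover have "ys \<noteq> []"
    using iso indecomposable by (auto simp: order_iso_def sum_indecomposable_def)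
  moreover have "ys = lower @ upper" by (simp add: lower_def upper_def)
  ultimately consider "ys = upper" "ys \<noteq> []" | "ys = lower" "ys \<noteq> []" by auto
  then show False
  proof cases
    case 1
    then have "Suc i < k" using upper_cell by (metis list.set_sel(1))
    then show False using no_copy_in_Av_cell[of "Suc i" ys] 1 ys upper_cell iso by auto
  next
    case 2
    then show False using no_copy_in_Av_cell[OF i ys] lower_cell iso by auto
  qed
qed

lemma no_skew_copy:
  assumes x0: "x0 < length \<pi>" and ys: "sorted_wrt (<) ys"
    and below_right: "\<forall>y\<in>set ys. x0 < y \<and> y < length \<pi> \<and> \<pi> ! y < \<pi> ! x0"
  shows "\<not> order_iso (map ((!) \<pi>) ys) \<sigma>"
proof -
  obtain i j where i: "i < k" and x0_cell: "in_cell x0 i j" and j: "j = i \<or> j = Suc i"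
    using ex_cell[OF x0] by blast
  have "in_cell y i i \<or> (Suc i < k \<and> in_cell y (Suc i) (Suc i))" if y: "y \<in> set ys" for y
  proof -
    obtain i' j' where y_cell: "i \<le> i'" "j' \<le> j" "i' < k" "j' = i' \<or> j' = Suc i'" "in_cell y i' j'"
      using below_right_cell[OF x0_cell i] below_right y i j by fastforce
    have "\<not> (i' = i \<and> j' = Suc i)"
    proof
      assume "i' = i \<and> j' = Suc i"
      then have "in_cell x0 i (Suc i)" "in_cell y i (Suc i)" using y_cell j x0_cell by auto
      then show False using Inc_cell_increasing[of x0 i y] i below_right y by fastforce
    qed
    then show ?thesis using y_cell j by (auto simp: le_Suc_eq)
  qed
  then show ?thesis using no_copy_in_adjacent_Av_cells[OF i ys] by blast
qed

lemma avoids_skew_sum: "\<not> contains \<pi> (skew_sum [0] \<sigma>)"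
proof
  assume "contains \<pi> (skew_sum [0] \<sigma>)"
  then show False
    using contains_skew_sum_singleton indecomposable no_skew_copy
    unfolding sum_indecomposable_def by blast
qed

end

theorem proposition11:
  assumes "sum_indecomposable \<sigma>"
  shows "St Inc (Av \<sigma>) \<subseteq> Av (skew_sum [0] \<sigma>)"
proof
  fix \<pi> assume "\<pi> \<in> St Inc (Av \<sigma>)"
  then obtain k c r where "staircase_gridding \<pi> k c r Inc (Av \<sigma>)"
    by (auto simp: St_def St_k_def Grid_def staircase_gridding_def)
  then interpret staircase_gridding_Inc_Av \<pi> k c r \<sigma>
    using assms by (simp add: staircase_gridding_Inc_Av_def staircase_gridding_Inc_Av_axioms_def)
  show "\<pi> \<in> Av (skew_sum [0] \<sigma>)"
    using perm avoids_skew_sum by (simp add: Av_def)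
qed

end
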